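(* Every prime reciprocal Puiseux monoid satisfies the ascending chain condition on principal ideals (ACCP).
   Context: A Puiseux monoid is an additive submonoid of $(\mathbb{Q}_{\ge 0},+)$. For $q\in\mathbb{Q}_{>0}$, $\mathsf{d}(q)$ denotes the denominator of $q$ in lowest terms. A Puiseux monoid $M$ is prime reciprocal if there exist an infinite set $P$ of prime numbers and a set $S\subseteq\mathbb{Q}_{>0}$ whose elements have pairwise distinct denominators such that $M$ is generated by $S$ as a monoid and $\{\mathsf{d}(s)\mid s\in S\}=P$. A principal ideal of a (commutative, cancellative) monoid $M$ is a set $x+M$ with $x\in M$; $M$ satisfies ACCP if every ascending chain $x_1+M\subseteq x_2+M\subseteq\cdots$ of principal ideals eventually stabilizes. *)

theory Defs
  imports Complex_Main "HOL-Computational_Algebra.Primes"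
begin

definition den :: "rat \<Rightarrow> int" where
  "den q = snd (quotient_of q)"

inductive_set monoid_gen :: "rat set \<Rightarrow> rat set" for S :: "rat set" where
  zero: "0 \<in> monoid_gen S"
| add: "s \<in> S \<Longrightarrow> x \<in> monoid_gen S \<Longrightarrow> s + x \<in> monoid_gen S"

definition puiseux_monoid :: "rat set \<Rightarrow> bool" where
  "puiseux_monoid M \<longleftrightarrow> 0 \<in> M \<and> (\<forall>x\<in>M. \<forall>y\<in>M. x + y \<in> M) \<and> (\<forall>x\<in>M. 0 \<le> x)"

definition prime_reciprocal :: "rat set \<Rightarrow> bool" where
  "prime_reciprocal M \<longleftrightarrow> puiseux_monoid M \<and>
     (\<exists>(P :: int set) (S :: rat set).
        infinite P \<and> (\<forall>p\<in>P. prime p) \<and>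
        (\<forall>s\<in>S. 0 < s) \<and> inj_on den S \<and> den ` S = P \<and>
        M = monoid_gen S)"

definition principal_ideal :: "rat set \<Rightarrow> rat \<Rightarrow> rat set" where
  "principal_ideal M x = {x + y | y. y \<in> M}"

definition ACCP :: "rat set \<Rightarrow> bool" where
  "ACCP M \<longleftrightarrow> (\<forall>x :: nat \<Rightarrow> rat. (\<forall>n. x n \<in> M) \<longrightarrow>
      (\<forall>n. principal_ideal M (x n) \<subseteq> principal_ideal M (x (Suc n))) \<longrightarrow>
      (\<exists>N. \<forall>n\<ge>N. principal_ideal M (x n) = principal_ideal M (x N)))"

end

theory Submission
  imports Defs
begin

(* If the denominators of the generators are pairwise distinct primes, every element y of the
   monoid has a unique normal form  y = n + sum c(s) s  with n a natural number and
   0 <= c(s) < d(s): in a relation  sum c(s) s \<in> \<int>  each prime d(s) must divide c(s).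
   Adding a generator s either raises c(s) by one or, when c(s) + 1 = d(s), clears c(s) and
   carries the positive integer d(s) s into n.  Hence the pair (n, sum c(s)), ordered
   lexicographically, strictly increases along every proper divisibility y | y + m, and an
   ascending chain of principal ideals is a descending sequence for this well-founded order. *)

definition num :: "rat \<Rightarrow> int" where
  "num q = fst (quotient_of q)"

lemma den_pos: "0 < den q"
  unfolding den_def by (rule quotient_of_denom_pos')

lemma coprime_num_den: "coprime (num q) (den q)"
  by (rule quotient_of_coprime) (simp add: num_def den_def)

lemma den_mult_eq_num: "of_int (den q) * q = of_int (num q)"
proof -
  have "q = of_int (num q) / of_int (den q)"
    by (rule quotient_of_div) (simp add: num_def den_def)
  then show ?thesis
    using den_pos[of q] by (simp add: field_simps)
qed

lemma num_pos: "0 < q \<Longrightarrow> 0 < num q"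
  using den_mult_eq_num[of q] den_pos[of q]
  by (metis of_int_0_less_iff zero_less_mult_iff)

lemma den_dvd_if_mult_in_Ints:
  assumes "of_int m * q \<in> \<int>"
  shows "den q dvd m"
proof -
  obtain k where "of_int m * q = of_int k"
    using assms Ints_cases by metis
  have "of_int (m * num q) = of_int m * (of_int (den q) * q)"
    using den_mult_eq_num[of q] by simp
  also have "\<dots> = of_int (den q) * (of_int m * q)"
    by (simp only: ac_simps)
  also have "\<dots> = (of_int (k * den q) :: rat)"
    using \<open>of_int m * q = of_int k\<close> by simp
  finally have "of_int (m * num q) = (of_int (k * den q) :: rat)" .
  then have "den q dvd m * num q"
    by (simp only: of_int_eq_iff) simp
  then show ?thesis
    using coprime_num_den[of q] by (simp add: coprime_dvd_mult_left_iff coprime_commute)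
qed

lemma prime_den_dvd_coeff:
  fixes c :: "rat \<Rightarrow> int"
  assumes T: "finite T" and prime: "\<forall>t\<in>T. prime (den t)" and inj: "inj_on den T"
    and int: "(\<Sum>t\<in>T. of_int (c t) * t) \<in> \<int>" and s: "s \<in> T"
  shows "den s dvd c s"
proof -
  define Q where "Q = (\<Prod>t\<in>T - {s}. den t)"
  have others_int: "of_int (c t) * (of_int Q * t) \<in> \<int>" if "t \<in> T - {s}" for t
  proof -
    have "den t dvd Q"
      unfolding Q_def using T that by (intro dvd_prodI) auto
    then obtain R where "Q = den t * R" ..
    then have "of_int Q * t = of_int (R * num t)"
      using den_mult_eq_num[of t] by (simp add: algebra_simps)
    then show ?thesis by simp
  qed
  have "of_int Q * (\<Sum>t\<in>T. of_int (c t) * t)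
      = of_int (Q * c s) * s + (\<Sum>t\<in>T - {s}. of_int (c t) * (of_int Q * t))"
    by (simp add: sum.remove[OF T s] sum_distrib_left algebra_simps)
  then have "of_int (Q * c s) * s
      = of_int Q * (\<Sum>t\<in>T. of_int (c t) * t) - (\<Sum>t\<in>T - {s}. of_int (c t) * (of_int Q * t))"
    by simp
  also have "\<dots> \<in> \<int>"
    using Ints_mult[OF Ints_of_int int] others_int by (intro Ints_diff Ints_sum) auto
  finally have "den s dvd Q * c s"
    by (rule den_dvd_if_mult_in_Ints)
  moreover have ps: "prime (den s)"
    using prime s by blast
  moreover have "\<not> den s dvd Q"
  proof
    assume "den s dvd Q"
    then obtain t where t: "t \<in> T - {s}" "den s dvd den t"
      unfolding Q_def using prime_dvd_prod_iff[OF _ ps] T by blast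
    then have "den s = den t"
      using primes_dvd_imp_eq[OF ps] prime by blast
    then show False
      using inj t s by (auto dest: inj_onD)
  qed
  ultimately show ?thesis
    by (simp add: prime_dvd_mult_iff)
qed

definition coeff_support :: "(rat \<Rightarrow> nat) \<Rightarrow> rat set" where
  "coeff_support c = {s. c s \<noteq> 0}"

definition repr_value :: "nat \<Rightarrow> (rat \<Rightarrow> nat) \<Rightarrow> rat" where
  "repr_value n c = of_nat n + (\<Sum>s\<in>coeff_support c. of_nat (c s) * s)"

definition coeff_count :: "(rat \<Rightarrow> nat) \<Rightarrow> nat" where
  "coeff_count c = (\<Sum>s\<in>coeff_support c. c s)"

definition normal_coeffs :: "rat set \<Rightarrow> (rat \<Rightarrow> nat) \<Rightarrow> bool" where
  "normal_coeffs S c \<longleftrightarrow>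
     finite (coeff_support c) \<and> coeff_support c \<subseteq> S \<and> (\<forall>s. c s < nat (den s))"

lemma sum_coeff_support_superset:
  fixes g :: "nat \<Rightarrow> rat \<Rightarrow> 'a::comm_monoid_add"
  assumes "finite A" "coeff_support c \<subseteq> A" "\<And>s. g 0 s = 0"
  shows "(\<Sum>s\<in>coeff_support c. g (c s) s) = (\<Sum>s\<in>A. g (c s) s)"
  using assms by (intro sum.mono_neutral_left) (auto simp: coeff_support_def)

lemma sum_update_swap:
  fixes h h' :: "'a \<Rightarrow> 'b::comm_monoid_add"
  assumes "finite A" "s \<in> A" "\<And>t. t \<in> A - {s} \<Longrightarrow> h' t = h t"
  shows "sum h' A + h s = sum h A + h' s"
proof -
  have "sum h' (A - {s}) = sum h (A - {s})"
    using assms(3) by (rule sum.cong[OF refl])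
  then show ?thesis
    by (simp add: sum.remove[OF assms(1,2)] add.commute add.left_commute)
qed

lemma coeff_support_update: "coeff_support (c(s := j)) \<subseteq> insert s (coeff_support c)"
  by (auto simp: coeff_support_def)

lemma repr_value_update:
  assumes "finite (coeff_support c)"
  shows "repr_value n (c(s := j)) + of_nat (c s) * s = repr_value n c + of_nat j * s"
proof -
  define A where "A = insert s (coeff_support c)"
  have A: "finite A" "s \<in> A" "coeff_support c \<subseteq> A" "coeff_support (c(s := j)) \<subseteq> A"
    using assms coeff_support_update[of c s j] by (auto simp: A_def)
  have "(\<Sum>t\<in>coeff_support c. of_nat (c t) * t) = (\<Sum>t\<in>A. of_nat (c t) * t)"
    by (rule sum_coeff_support_superset[OF A(1,3)]) simp
  moreover have "(\<Sum>t\<in>coeff_support (c(s := j)). of_nat ((c(s := j)) t) * t)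
      = (\<Sum>t\<in>A. of_nat ((c(s := j)) t) * t)"
    by (rule sum_coeff_support_superset[OF A(1,4)]) simp
  moreover have "(\<Sum>t\<in>A. of_nat ((c(s := j)) t) * t) + of_nat (c s) * s
      = (\<Sum>t\<in>A. of_nat (c t) * t) + of_nat ((c(s := j)) s) * s"
    by (rule sum_update_swap[OF A(1,2)]) simp
  ultimately show ?thesis
    unfolding repr_value_def by simp
qed

lemma coeff_count_update:
  assumes "finite (coeff_support c)"
  shows "coeff_count (c(s := j)) + c s = coeff_count c + j"
proof -
  define A where "A = insert s (coeff_support c)"
  have A: "finite A" "s \<in> A" "coeff_support c \<subseteq> A" "coeff_support (c(s := j)) \<subseteq> A"
    using assms coeff_support_update[of c s j] by (auto simp: A_def)
  have "coeff_count c = sum c A"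
    unfolding coeff_count_def by (rule sum_coeff_support_superset[OF A(1,3), of "\<lambda>k _. k"]) simp
  moreover have "coeff_count (c(s := j)) = sum (c(s := j)) A"
    unfolding coeff_count_def by (rule sum_coeff_support_superset[OF A(1,4), of "\<lambda>k _. k"]) simp
  moreover have "sum (c(s := j)) A + c s = sum c A + (c(s := j)) s"
    by (rule sum_update_swap[OF A(1,2)]) simp
  ultimately show ?thesis
    by simp
qed

lemma normal_coeffs_update:
  assumes "normal_coeffs S c" "s \<in> S" "j < nat (den s)"
  shows "normal_coeffs S (c(s := j))"
  using assms coeff_support_update[of c s j] finite_subset[OF coeff_support_update[of c s j]]
  unfolding normal_coeffs_def by auto

lemma normal_repr_add_generator:
  assumes c: "normal_coeffs S c" and s: "s \<in> S" "0 < s"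
  obtains c' where "normal_coeffs S c'" "s + repr_value n c = repr_value n c'"
      "coeff_count c' = Suc (coeff_count c)"
    | n' c' where "normal_coeffs S c'" "s + repr_value n c = repr_value n' c'" "n < n'"
proof -
  have fin: "finite (coeff_support c)" and bound: "c s < nat (den s)"
    using c unfolding normal_coeffs_def by auto
  show thesis
  proof (cases "Suc (c s) < nat (den s)")
    case True
    let ?c' = "c(s := Suc (c s))"
    have "repr_value n ?c' + of_nat (c s) * s = repr_value n c + (of_nat (c s) * s + s)"
      using repr_value_update[OF fin, of n s "Suc (c s)"] by (simp add: distrib_right)
    then have "s + repr_value n c = repr_value n ?c'"
      by simp
    moreover have "coeff_count ?c' = Suc (coeff_count c)"
      using coeff_count_update[OF fin, of s "Suc (c s)"] by simp
    ultimately show thesis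
      using that(1) normal_coeffs_update[OF c s(1) True] by blast
  next
    case False
    let ?c' = "c(s := 0)" and ?carry = "nat (num s)"
    have "of_nat (Suc (c s)) = (of_int (den s) :: rat)"
      using False bound den_pos[of s] by (metis Suc_lessI of_int_of_nat_eq int_nat_eq less_imp_le)
    then have "of_nat (c s) * s + s = of_int (den s) * s"
      by (metis distrib_right mult_1 of_nat_Suc add.commute)
    also have "\<dots> = of_nat ?carry"
      using den_mult_eq_num[of s] num_pos[OF s(2)] by simp
    finally have "of_nat (c s) * s + s = of_nat ?carry" .
    moreover have "repr_value n ?c' + of_nat (c s) * s = repr_value n c"
      using repr_value_update[OF fin, of n s 0] by simp
    moreover have "repr_value (n + ?carry) ?c' = repr_value n ?c' + of_nat ?carry"
      unfolding repr_value_def by simp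
    ultimately have "s + repr_value n c = repr_value (n + ?carry) ?c'"
      by simp
    moreover have "n < n + ?carry"
      using num_pos[OF s(2)] by simp
    ultimately show thesis
      using that(2) normal_coeffs_update[OF c s(1), of 0] den_pos[of s] by auto
  qed
qed

lemma monoid_gen_add: "x \<in> monoid_gen S \<Longrightarrow> y \<in> monoid_gen S \<Longrightarrow> x + y \<in> monoid_gen S"
  by (induction x rule: monoid_gen.induct) (auto simp: add.assoc intro: monoid_gen.intros)

lemma normal_repr_exists:
  assumes "\<forall>s\<in>S. 0 < s" and "y \<in> monoid_gen S"
  shows "\<exists>n c. normal_coeffs S c \<and> y = repr_value n c"
  using assms(2)
proof (induction y rule: monoid_gen.induct)
  case zero
  have "normal_coeffs S (\<lambda>_. 0)" "0 = repr_value 0 (\<lambda>_. 0)"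
    using den_pos by (simp_all add: normal_coeffs_def coeff_support_def repr_value_def)
  then show ?case by blast
next
  case (add s x)
  then obtain n c where "normal_coeffs S c" "x = repr_value n c"
    by blast
  then show ?case
    using normal_repr_add_generator[of S c s n] add.hyps(1) assms(1) by metis
qed

lemma normal_repr_unique:
  assumes prime: "\<forall>s\<in>S. prime (den s)" and inj: "inj_on den S"
    and c: "normal_coeffs S c" and c': "normal_coeffs S c'"
    and eq: "repr_value n c = repr_value n' c'"
  shows "n = n' \<and> c = c'"
proof -
  define T where "T = coeff_support c \<union> coeff_support c'"
  have T: "finite T" "T \<subseteq> S"
    using c c' unfolding T_def normal_coeffs_def by auto
  have "repr_value m d = of_nat m + (\<Sum>t\<in>T. of_nat (d t) * t)"
    if "coeff_support d \<subseteq> T" for m d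
    unfolding repr_value_def
    by (simp add: sum_coeff_support_superset[OF T(1) that, of "\<lambda>k t. of_nat k * t"])
  then have "(\<Sum>t\<in>T. of_int (int (c t) - int (c' t)) * t) = of_int (int n' - int n)"
    using eq by (simp add: T_def sum_subtractf left_diff_distrib)
  then have int: "(\<Sum>t\<in>T. of_int (int (c t) - int (c' t)) * t) \<in> \<int>"
    by simp
  have "c t = c' t" for t
  proof (cases "t \<in> T")
    case True
    have "den t dvd int (c t) - int (c' t)"
      using prime T inj_on_subset[OF inj T(2)]
      by (intro prime_den_dvd_coeff[OF T(1) _ _ int True]) auto
    moreover have "c t < nat (den t)" "c' t < nat (den t)"
      using c c' unfolding normal_coeffs_def by auto
    ultimately show ?thesis
      using dvd_imp_le_int[of "int (c t) - int (c' t)" "den t"] by fastforce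
  next
    case False
    then show ?thesis
      unfolding T_def coeff_support_def by auto
  qed
  then have "c = c'" ..
  with eq show ?thesis
    unfolding repr_value_def by simp
qed

definition normal_form :: "rat set \<Rightarrow> rat \<Rightarrow> nat \<times> (rat \<Rightarrow> nat)" where
  "normal_form S y = (THE (n, c). normal_coeffs S c \<and> y = repr_value n c)"

definition height :: "rat set \<Rightarrow> rat \<Rightarrow> nat \<times> nat" where
  "height S y = (case normal_form S y of (n, c) \<Rightarrow> (n, coeff_count c))"

lemma height_repr_value:
  assumes "\<forall>s\<in>S. prime (den s)" "inj_on den S" "normal_coeffs S c"
  shows "height S (repr_value n c) = (n, coeff_count c)"
proof -
  have "normal_form S (repr_value n c) = (n, c)"
    unfolding normal_form_def
    using normal_repr_unique[OF assms] assms(3) by (intro the_equality) auto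
  then show ?thesis
    unfolding height_def by simp
qed

lemma height_less_add_generator:
  assumes prime: "\<forall>s\<in>S. prime (den s)" and inj: "inj_on den S" and pos: "\<forall>s\<in>S. 0 < s"
    and y: "y \<in> monoid_gen S" and s: "s \<in> S"
  shows "(height S y, height S (s + y)) \<in> less_than <*lex*> less_than"
proof -
  obtain n c where c: "normal_coeffs S c" and y_eq: "y = repr_value n c"
    using normal_repr_exists[OF pos y] by blast
  note height = height_repr_value[OF prime inj]
  from c s pos[rule_format, OF s] show ?thesis
  proof (cases rule: normal_repr_add_generator[where n = n])
    case (1 c')
    then show ?thesis
      using height[OF c] height[of c'] y_eq by simp
  next
    case (2 n' c')
    then show ?thesis
      using height[OF c] height[of c'] y_eq by simp
  qed
qed

lemma height_less_add:
  assumes prime: "\<forall>s\<in>S. prime (den s)" and inj: "inj_on den S" and pos: "\<forall>s\<in>S. 0 < s"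
    and m: "m \<in> monoid_gen S" "m \<noteq> 0" and y: "y \<in> monoid_gen S"
  shows "(height S y, height S (m + y)) \<in> less_than <*lex*> less_than"
  using m
proof (induction m rule: monoid_gen.induct)
  case zero
  then show ?case by simp
next
  case (add s x)
  have step: "(height S (x + y), height S (s + x + y)) \<in> less_than <*lex*> less_than"
    using height_less_add_generator[OF prime inj pos monoid_gen_add[OF add.hyps(2) y] add.hyps(1)]
    by (simp add: add.assoc)
  show ?case
  proof (cases "x = 0")
    case False
    have "trans (less_than <*lex*> less_than)"
      by (intro trans_lex_prod trans_less_than)
    then show ?thesis
      using add.IH[OF False] step by (rule transD)
  qed (use step in simp)
qed

lemma wf_weakly_descending_seq_stabilizes:
  assumes "wf r" and "\<And>n. f (Suc n) = f n \<or> (f (Suc n), f n) \<in> r"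
  shows "\<exists>N. \<forall>n\<ge>N. f n = f N"
proof -
  obtain N where min: "\<And>y. (y, f N) \<in> r \<Longrightarrow> y \<notin> range f"
    using wfE_min[OF assms(1), of "f 0" "range f"] by blast
  have "f n = f N" if "N \<le> n" for n
    using that
  proof (induction n rule: dec_induct)
    case (step n)
    then show ?case
      using assms(2)[of n] min[of "f (Suc n)"] by auto
  qed simp
  then show ?thesis
    by blast
qed

lemma ACCP_monoid_gen:
  assumes prime: "\<forall>s\<in>S. prime (den s)" and inj: "inj_on den S" and pos: "\<forall>s\<in>S. 0 < s"
  shows "ACCP (monoid_gen S)"
  unfolding ACCP_def
proof (intro allI impI)
  fix x :: "nat \<Rightarrow> rat"
  assume x: "\<forall>n. x n \<in> monoid_gen S"
    and chain: "\<forall>n. principal_ideal (monoid_gen S) (x n)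
                    \<subseteq> principal_ideal (monoid_gen S) (x (Suc n))"
  have "x (Suc n) = x n \<or> (x (Suc n), x n) \<in> inv_image (less_than <*lex*> less_than) (height S)"
    for n
  proof -
    have "x n \<in> principal_ideal (monoid_gen S) (x n)"
      unfolding principal_ideal_def using monoid_gen.zero by force
    then have "x n \<in> principal_ideal (monoid_gen S) (x (Suc n))"
      using chain by blast
    then obtain m where "m \<in> monoid_gen S" "x n = m + x (Suc n)"
      unfolding principal_ideal_def by (auto simp: add.commute)
    then show ?thesis
      using height_less_add[OF prime inj pos _ _ x[rule_format]] by (cases "m = 0") auto
  qed
  moreover have "wf (inv_image (less_than <*lex*> less_than) (height S))"
    by (intro wf_inv_image wf_lex_prod wf_less_than)
  ultimately obtain N where "\<forall>n\<ge>N. x n = x N"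
    using wf_weakly_descending_seq_stabilizes by blast
  then show "\<exists>N. \<forall>n\<ge>N. principal_ideal (monoid_gen S) (x n)
                        = principal_ideal (monoid_gen S) (x N)"
    by metis
qed

theorem mainTheorem5:
  fixes M :: "rat set"
  assumes "prime_reciprocal M"
  shows "ACCP M"
proof -
  obtain P S where "\<forall>p\<in>P. prime p" "\<forall>s\<in>S. 0 < s" "inj_on den S" "den ` S = P"
      and "M = monoid_gen S"
    using assms unfolding prime_reciprocal_def by blast
  then show ?thesis
    using ACCP_monoid_gen[of S] by blast
qed

end
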